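(* Fix $C\ge0$. With $T_k$ as below, as $n\to\infty$, uniformly for $3n/5-C\le k\le 9n/10+C$ (and $k\le n$), \[ T_k=\sum_{g\in\mathcal M(k)}\Bigl|\sum_{h\in\mathcal M(n-k)}\psi(Q_A(gh))\Bigr|\ll_A q^{19n/20+o(n)}. \]
   Context: $q$ is a fixed odd prime power; fix $m\ge0$ and $c_0,\dots,c_m\in\mathbb F_q$ with $c_m\ne0$. For each $n$, $\ell_n$ is an arbitrary linear form in the coefficients $f_0,\dots,f_n$ and for $f=\sum_{i=0}^nf_it^i$ of degree $n$, $Q_A(f)=\sum_{j=0}^m c_j\sum_{i=j}^n f_if_{i-j}+\ell_n(f)$. $\mathcal M(k)$ is the set of monic polynomials of degree $k$ in $\mathbb F_q[t]$, $\psi$ a non-trivial additive character of $\mathbb F_q$. Implied constants depend only on $q$, $C$ and $c_0,\dots,c_m$ and are uniform in $\ell_n,\psi$; $q^{o(n)}$ is a factor $q^{\varepsilon(n)n}$ with $\varepsilon(n)\to0$. *)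

theory Defs
  imports "HOL-Analysis.Analysis" "HOL-Computational_Algebra.Polynomial"
begin

definition monics :: "nat \<Rightarrow> ('a::field) poly set" where
  "monics k = {g. degree g = k \<and> lead_coeff g = 1}"

definition add_char :: "('a::field \<Rightarrow> complex) \<Rightarrow> bool" where
  "add_char \<psi> \<longleftrightarrow> (\<forall>x y. \<psi> (x + y) = \<psi> x * \<psi> y) \<and> (\<forall>x. norm (\<psi> x) = 1)"

definition nontrivial_add_char :: "('a::field \<Rightarrow> complex) \<Rightarrow> bool" where
  "nontrivial_add_char \<psi> \<longleftrightarrow> add_char \<psi> \<and> (\<exists>x. \<psi> x \<noteq> 1)"

text \<open>The quadratic form Q_A. The linear forms are given by coefficients
  lf n i, so that l_n(f) = sum_{i=0}^n lf n i * f_i, with n = degree f.\<close>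
definition QA :: "nat \<Rightarrow> (nat \<Rightarrow> 'a::field) \<Rightarrow> (nat \<Rightarrow> nat \<Rightarrow> 'a) \<Rightarrow> 'a poly \<Rightarrow> 'a" where
  "QA m c lf f =
     (\<Sum>j\<le>m. c j * (\<Sum>i=j..degree f. coeff f i * coeff f (i - j)))
     + (\<Sum>i\<le>degree f. lf (degree f) i * coeff f i)"

definition Tsum :: "nat \<Rightarrow> (nat \<Rightarrow> 'a::field) \<Rightarrow> (nat \<Rightarrow> nat \<Rightarrow> 'a) \<Rightarrow> ('a \<Rightarrow> complex)
    \<Rightarrow> nat \<Rightarrow> nat \<Rightarrow> real" where
  "Tsum m c lf \<psi> n k =
     (\<Sum>g\<in>monics k. norm (\<Sum>h\<in>monics (n - k). \<psi> (QA m c lf (g * h))))"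

end

theory Submission
  imports Defs "HOL-Computational_Algebra.Polynomial_Factorial" "HOL-Real_Asymp.Real_Asymp"
begin

text \<open>
  By Cauchy-Schwarz, T_k^2 is at most q^k times the sum, over pairs (h1, h2) of monic
  polynomials of degree L = n - k, of |sum_g psi(Q(g h1) - Q(g h2))|. Weyl differencing
  g -> g + y bounds the square of such a sum by q^k times the number of y of degree < k on
  which a linear form in g vanishes identically. That form is a coefficient of
  y* (h1 h1* - h2 h2*) t^m (C(t) + C(1/t)), where p* is the reciprocal polynomial and
  C(t) = sum_j c_j t^j. Unless h1 h1* = h2 h2*, the last two factors form a non-zero
  self-reciprocal polynomial of degree at most 2(L + m) (for m = 0 because q is odd), which
  leaves at most q^(L+m) such y. On the diagonal h2 is a monic divisor of h1 h1*, and by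
  unique factorisation a polynomial of degree N has q^o(N) monic divisors. Altogether
  T_k^2 <= q^(n+k+o(n)) + q^(2n-k+(n+m)/2), and for 3n/5 - C <= k <= 9n/10 + C both
  exponents are at most 19n/10 + C + m/2.
\<close>

section \<open>Polynomials of bounded degree and monic polynomials\<close>

definition polys_below :: "nat \<Rightarrow> 'a::zero poly set" where
  "polys_below k = {p. \<forall>i\<ge>k. coeff p i = 0}"

lemma card_polys_below: "card (polys_below k :: 'a::{comm_monoid_add,finite} poly set) = CARD('a) ^ k"
proof -
  let ?f = "\<lambda>p::'a poly. restrict (coeff p) {..<k}"
  have "bij_betw ?f (polys_below k) (PiE {..<k} (\<lambda>_. UNIV))"
  proof (rule bij_betwI')
    fix p q :: "'a poly" assume "p \<in> polys_below k" "q \<in> polys_below k"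
    then show "(?f p = ?f q) = (p = q)"
      by (auto simp: polys_below_def poly_eq_iff fun_eq_iff) (metis not_le)
  next
    fix f assume f: "f \<in> PiE {..<k} (\<lambda>_. (UNIV::'a set))"
    define p where "p = (\<Sum>i<k. monom (f i) i)"
    have coeff_p: "coeff p i = (if i < k then f i else 0)" for i
      by (simp add: p_def coeff_sum coeff_monom)
    have "p \<in> polys_below k" by (simp add: polys_below_def coeff_p)
    moreover have "f = ?f p" using f by (auto simp: coeff_p fun_eq_iff PiE_def extensional_def)
    ultimately show "\<exists>p\<in>polys_below k. f = ?f p" by blast
  qed auto
  then have "card (polys_below k :: 'a poly set) = card (PiE {..<k} (\<lambda>_. (UNIV::'a set)))"
    by (rule bij_betw_same_card)
  then show ?thesis by (simp add: card_PiE)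
qed

lemma finite_polys_below: "finite (polys_below k :: 'a::{comm_monoid_add,finite} poly set)"
  by (rule card_ge_0_finite) (simp add: card_polys_below)

lemma polys_below_add: "p \<in> polys_below k \<Longrightarrow> q \<in> polys_below k \<Longrightarrow> p + q \<in> polys_below k"
  by (auto simp: polys_below_def)

lemma polys_below_diff:
  "p \<in> polys_below k \<Longrightarrow> q \<in> polys_below k \<Longrightarrow> (p::'a::ab_group_add poly) - q \<in> polys_below k"
  by (auto simp: polys_below_def)

lemma polys_below_smult: "p \<in> polys_below k \<Longrightarrow> smult a p \<in> polys_below k"
  by (auto simp: polys_below_def)

lemma degree_le_if_polys_below: "p \<in> polys_below k \<Longrightarrow> degree p \<le> k"
  by (intro degree_le) (auto simp: polys_below_def)

lemma polys_below_SucI: "degree p \<le> d \<Longrightarrow> p \<in> polys_below (Suc d)"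
  by (auto simp: polys_below_def coeff_eq_0)

lemma monom_in_polys_below: "i < k \<Longrightarrow> monom 1 i \<in> polys_below k"
  by (auto simp: polys_below_def coeff_monom)

lemma monics_eq_image: "monics k = (\<lambda>p. monom 1 k + p) ` (polys_below k :: 'a::field poly set)"
proof (intro set_eqI iffI)
  fix g :: "'a poly" assume "g \<in> monics k"
  then have "g - monom 1 k \<in> polys_below k"
    by (auto simp: monics_def polys_below_def coeff_monom coeff_eq_0)
  moreover have "g = monom 1 k + (g - monom 1 k)" by simp
  ultimately show "g \<in> (\<lambda>p. monom 1 k + p) ` polys_below k" by blast
next
  fix g :: "'a poly" assume "g \<in> (\<lambda>p. monom 1 k + p) ` polys_below k"
  then obtain p where p: "p \<in> polys_below k" and g: "g = monom 1 k + p" by auto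
  have coeff_g: "coeff g i = (if i = k then 1 else if i > k then 0 else coeff p i)" for i
    using p by (auto simp: g polys_below_def coeff_monom)
  have "degree g = k"
    by (intro antisym degree_le le_degree) (auto simp: coeff_g)
  then show "g \<in> monics k" by (simp add: monics_def coeff_g)
qed

lemma inj_on_add_monom: "inj_on (\<lambda>p. monom 1 k + p) (A::'a::field poly set)"
  by (auto intro: inj_onI)

lemma card_monics: "card (monics k :: 'a::{field,finite} poly set) = CARD('a) ^ k"
  by (simp add: monics_eq_image card_image inj_on_add_monom card_polys_below)

lemma finite_monics: "finite (monics k :: 'a::{field,finite} poly set)"
  by (simp add: monics_eq_image finite_polys_below)

lemma sum_monics:
  "(\<Sum>g\<in>monics k. F g) = (\<Sum>p\<in>(polys_below k::'a::{field,finite} poly set). F (monom 1 k + p))"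
  by (simp add: monics_eq_image sum.reindex inj_on_add_monom)

lemma monom_add_in_monics: "(p::'a::field poly) \<in> polys_below k \<Longrightarrow> monom 1 k + p \<in> monics k"
  by (auto simp: monics_eq_image)

lemma monics_nonzero: "g \<in> monics k \<Longrightarrow> (g::'a::field poly) \<noteq> 0"
  by (auto simp: monics_def)

lemma degree_mult_monics:
  "g \<in> monics k \<Longrightarrow> h \<in> monics l \<Longrightarrow> degree (g * (h::'a::field poly)) = k + l"
  by (simp add: degree_mult_eq monics_nonzero) (simp add: monics_def)

section \<open>Additive characters\<close>

lemma add_char_add: "add_char \<psi> \<Longrightarrow> \<psi> (x + y) = \<psi> x * \<psi> y"
  by (simp add: add_char_def)

lemma add_char_norm: "add_char \<psi> \<Longrightarrow> norm (\<psi> x) = 1"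
  by (simp add: add_char_def)

lemma add_char_0: assumes "add_char \<psi>" shows "\<psi> 0 = 1"
proof -
  have "\<psi> 0 * \<psi> 0 = \<psi> 0 * 1" using add_char_add[OF assms, of 0 0] by simp
  moreover have "\<psi> 0 \<noteq> 0" using add_char_norm[OF assms, of 0] by auto
  ultimately show ?thesis by (metis mult_left_cancel)
qed

lemma add_char_minus: assumes "add_char \<psi>" shows "\<psi> (- x) = cnj (\<psi> x)"
proof -
  have "\<psi> x * \<psi> (- x) = 1"
    using add_char_add[OF assms, of x "- x"] add_char_0[OF assms] by simp
  moreover have "\<psi> x * cnj (\<psi> x) = 1"
    using complex_norm_square[of "\<psi> x"] add_char_norm[OF assms, of x] by simp
  ultimately show ?thesis by (metis mult.left_commute mult.right_neutral)
qed

lemma add_char_diff: "add_char \<psi> \<Longrightarrow> \<psi> (x - y) = \<psi> x * cnj (\<psi> y)"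
  by (metis add_char_add add_char_minus diff_conv_add_uminus)

lemma norm_sum_add_char_le: "add_char \<psi> \<Longrightarrow> norm (\<Sum>x\<in>A. \<psi> (f x)) \<le> real (card A)"
  using norm_sum[of "\<lambda>x. \<psi> (f x)" A] by (simp add: add_char_norm)

lemma norm_sum_add_char_squared:
  assumes "add_char \<psi>"
  shows "complex_of_real ((norm (\<Sum>x\<in>A. \<psi> (f x)))\<^sup>2) = (\<Sum>x\<in>A. \<Sum>x'\<in>A. \<psi> (f x - f x'))"
  unfolding complex_norm_square cnj_sum sum_product by (simp add: add_char_diff[OF assms])

lemma sum_add_char_linear:
  fixes \<Lambda> :: "'a::{field,finite} poly \<Rightarrow> 'a"
  assumes psi: "nontrivial_add_char \<psi>"
    and add: "\<And>x y. \<Lambda> (x + y) = \<Lambda> x + \<Lambda> y"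
    and hom: "\<And>a x. \<Lambda> (smult a x) = a * \<Lambda> x"
  shows "(\<Sum>x\<in>polys_below k. \<psi> (\<Lambda> x))
    = (if \<forall>x\<in>polys_below k. \<Lambda> x = 0 then of_nat (CARD('a) ^ k) else 0)"
proof (cases "\<forall>x\<in>polys_below k. \<Lambda> x = 0")
  case True
  have ac: "add_char \<psi>" using psi by (simp add: nontrivial_add_char_def)
  with True have "(\<Sum>x\<in>polys_below k. \<psi> (\<Lambda> x)) = (\<Sum>x\<in>(polys_below k :: 'a poly set). 1)"
    by (intro sum.cong) (auto simp: add_char_0)
  with True show ?thesis by (simp add: card_polys_below)
next
  case False
  then obtain e where e: "e \<in> polys_below k" "\<Lambda> e \<noteq> 0" by blast
  have ac: "add_char \<psi>" using psi by (simp add: nontrivial_add_char_def)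
  obtain a where a: "\<psi> a \<noteq> 1" using psi by (auto simp: nontrivial_add_char_def)
  define e' where "e' = smult (a / \<Lambda> e) e"
  have e': "e' \<in> polys_below k" "\<Lambda> e' = a"
    using e by (simp_all add: e'_def hom polys_below_smult)
  have "(\<Sum>x\<in>polys_below k. \<psi> (\<Lambda> x)) = (\<Sum>x\<in>polys_below k. \<psi> (\<Lambda> (x + e')))"
    by (rule sum.reindex_bij_witness[of _ "\<lambda>x. x + e'" "\<lambda>x. x - e'"])
       (auto simp: e' polys_below_add polys_below_diff)
  also have "\<dots> = \<psi> a * (\<Sum>x\<in>polys_below k. \<psi> (\<Lambda> x))"
    by (simp add: add e' add_char_add[OF ac] sum_distrib_left mult.commute)
  finally have "(1 - \<psi> a) * (\<Sum>x\<in>polys_below k. \<psi> (\<Lambda> x)) = 0" by (simp add: algebra_simps)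
  with a False show ?thesis by simp
qed

section \<open>The reciprocal of a polynomial\<close>

text \<open>\<open>recip N p = t\<^sup>N p(1/t)\<close> if \<open>degree p \<le> N\<close>; coefficients of \<open>p\<close> above \<open>N\<close> are
  dropped.\<close>

definition recip :: "nat \<Rightarrow> 'a::comm_semiring_1 poly \<Rightarrow> 'a poly" where
  "recip N p = (\<Sum>i\<le>N. monom (coeff p i) (N - i))"

lemma coeff_recip: "coeff (recip N p) j = (if j \<le> N then coeff p (N - j) else 0)"
proof -
  have "coeff (recip N p) j = (\<Sum>i\<le>N. if i = N - j \<and> j \<le> N then coeff p i else 0)"
    unfolding recip_def coeff_sum coeff_monom by (intro sum.cong) auto
  also have "\<dots> = (if j \<le> N then coeff p (N - j) else 0)"
    by (cases "j \<le> N") (simp_all add: sum.delta)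
  finally show ?thesis .
qed

lemma recip_0 [simp]: "recip N 0 = 0"
  by (simp add: poly_eq_iff coeff_recip)

lemma recip_add: "recip N (p + q) = recip N p + recip N q"
  by (simp add: poly_eq_iff coeff_recip)

lemma recip_diff: "recip N (p - q) = recip N p - recip N (q::'a::comm_ring_1 poly)"
  by (simp add: poly_eq_iff coeff_recip)

lemma recip_sum: "recip N (\<Sum>i\<in>A. f i) = (\<Sum>i\<in>A. recip N (f i))"
  by (induction A rule: infinite_finite_induct) (auto simp: recip_add poly_eq_iff coeff_recip)

lemma recip_monom: "d \<le> N \<Longrightarrow> recip N (monom a d) = monom a (N - d)"
  by (auto simp: poly_eq_iff coeff_recip coeff_monom)

lemma degree_recip: "degree (recip N p) \<le> N"
  by (rule degree_le) (simp add: coeff_recip)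

lemma recip_recip: "degree p \<le> N \<Longrightarrow> recip N (recip N p) = p"
  by (auto simp: poly_eq_iff coeff_recip coeff_eq_0)

lemma recip_eq_monom_mult_reflect_poly:
  "degree p \<le> N \<Longrightarrow> recip N p = monom 1 (N - degree p) * reflect_poly p"
  by (auto simp: poly_eq_iff coeff_recip coeff_monom_mult coeff_reflect_poly coeff_eq_0)

lemma recip_mult:
  fixes p q :: "'a::idom poly"
  assumes "degree p \<le> a" "degree q \<le> b"
  shows "recip (a + b) (p * q) = recip a p * recip b q"
proof (cases "p = 0 \<or> q = 0")
  case True
  then show ?thesis by auto
next
  case False
  then have d: "degree (p * q) = degree p + degree q" by (simp add: degree_mult_eq)
  with assms have "recip (a + b) (p * q) = monom 1 (a + b - degree (p * q)) * reflect_poly (p * q)"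
    by (intro recip_eq_monom_mult_reflect_poly) simp
  also have "\<dots> = (monom 1 (a - degree p) * reflect_poly p) * (monom 1 (b - degree q) * reflect_poly q)"
    using assms by (simp add: d reflect_poly_mult mult_monom algebra_simps)
  also have "\<dots> = recip a p * recip b q"
    using assms by (simp add: recip_eq_monom_mult_reflect_poly)
  finally show ?thesis .
qed

lemma self_recip_lowest_coeff:
  assumes "V \<noteq> 0" "recip (2 * L) V = V"
  obtains v where "v \<le> L" "coeff V v \<noteq> 0" "\<forall>i<v. coeff V i = 0"
proof -
  define v where "v = (LEAST i. coeff V i \<noteq> 0)"
  have nz: "coeff V v \<noteq> 0"
    unfolding v_def using leading_coeff_neq_0[OF assms(1)] by (rule LeastI)
  have low: "\<forall>i<v. coeff V i = 0" unfolding v_def using not_less_Least by blast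
  have rv: "coeff V v = (if v \<le> 2 * L then coeff V (2 * L - v) else 0)"
    using coeff_recip[of "2 * L" V v] assms(2) by simp
  then have "coeff V (2 * L - v) \<noteq> 0" using nz by presburger
  then have "\<not> 2 * L - v < v" using low by blast
  then have "v \<le> L" by arith
  then show ?thesis using nz low by (rule that)
qed

definition mult_recip :: "nat \<Rightarrow> 'a::comm_semiring_1 poly \<Rightarrow> 'a poly" where
  "mult_recip L h = h * recip L h"

lemma degree_mult_recip: "degree h \<le> L \<Longrightarrow> degree (mult_recip L h) \<le> 2 * L"
  unfolding mult_recip_def using degree_mult_le[of h "recip L h"] degree_recip[of L h] by linarith

lemma recip_mult_recip: "degree (h::'a::idom poly) \<le> L \<Longrightarrow> recip (2 * L) (mult_recip L h) = mult_recip L h"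
  unfolding mult_recip_def mult_2 by (simp add: recip_mult degree_recip recip_recip mult.commute)

lemma mult_recip_nonzero:
  assumes "h \<in> monics L" shows "mult_recip L (h::'a::field poly) \<noteq> 0"
proof -
  have "coeff (recip L h) 0 = 1" using assms by (auto simp: coeff_recip monics_def)
  then have "recip L h \<noteq> 0" by auto
  with monics_nonzero[OF assms] show ?thesis by (simp add: mult_recip_def)
qed

section \<open>The quadratic form as a polynomial coefficient\<close>

definition QA_bil :: "nat \<Rightarrow> (nat \<Rightarrow> 'a::comm_ring) \<Rightarrow> nat \<Rightarrow> 'a poly \<Rightarrow> 'a poly \<Rightarrow> 'a" where
  "QA_bil m c n u v = (\<Sum>j\<le>m. c j * (\<Sum>i=j..n. coeff u i * coeff v (i - j)))"

definition QA_lin :: "(nat \<Rightarrow> nat \<Rightarrow> 'a::comm_ring) \<Rightarrow> nat \<Rightarrow> 'a poly \<Rightarrow> 'a" where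
  "QA_lin lf n u = (\<Sum>i\<le>n. lf n i * coeff u i)"

definition QA_polar :: "nat \<Rightarrow> (nat \<Rightarrow> 'a::comm_ring) \<Rightarrow> nat \<Rightarrow> 'a poly \<Rightarrow> 'a poly \<Rightarrow> 'a" where
  "QA_polar m c n u v = QA_bil m c n u v + QA_bil m c n v u"

lemma QA_eq_bil_lin: "degree f = n \<Longrightarrow> QA m c lf f = QA_bil m c n f f + QA_lin lf n f"
  by (simp add: QA_def QA_bil_def QA_lin_def)

lemma QA_bil_add_left: "QA_bil m c n (u + v) w = QA_bil m c n u w + QA_bil m c n v w"
  and QA_bil_add_right: "QA_bil m c n w (u + v) = QA_bil m c n w u + QA_bil m c n w v"
  and QA_bil_smult_left: "QA_bil m c n (smult a u) w = a * QA_bil m c n u w"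
  and QA_bil_smult_right: "QA_bil m c n w (smult a u) = a * QA_bil m c n w u"
  and QA_lin_add: "QA_lin lf n (u + v) = QA_lin lf n u + QA_lin lf n v"
  by (simp_all add: QA_bil_def QA_lin_def algebra_simps sum.distrib sum_distrib_left)

lemma QA_bil_lin_shift:
  "(QA_bil m c n (a + b + y) (a + b + y) + QA_lin lf n (a + b + y))
     - (QA_bil m c n (a + b) (a + b) + QA_lin lf n (a + b))
   = QA_polar m c n b y
     + (QA_polar m c n a y + QA_bil m c n y y + QA_lin lf n y)"
  by (simp add: QA_polar_def QA_bil_add_left QA_bil_add_right QA_lin_add algebra_simps)

text \<open>\<open>QA_poly m c = t\<^sup>m (C(t) + C(1/t))\<close> for \<open>C(t) = \<Sum>\<^sub>j c\<^sub>j t\<^sup>j\<close>.\<close>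

definition QA_poly :: "nat \<Rightarrow> (nat \<Rightarrow> 'a::comm_semiring_1) \<Rightarrow> 'a poly" where
  "QA_poly m c = (\<Sum>j\<le>m. monom (c j) (m + j) + monom (c j) (m - j))"

lemma recip_QA_poly: "recip (2 * m) (QA_poly m c) = QA_poly m c"
proof -
  have "recip (2 * m) (QA_poly m c) = (\<Sum>j\<le>m. monom (c j) (m - j) + monom (c j) (m + j))"
    unfolding QA_poly_def recip_sum recip_add by (intro sum.cong) (auto simp: recip_monom)
  then show ?thesis unfolding QA_poly_def by (simp add: add.commute)
qed

lemma degree_QA_poly: "degree (QA_poly m c) \<le> 2 * m"
  unfolding QA_poly_def by (rule degree_le) (auto simp: coeff_sum coeff_monom intro!: sum.neutral)

lemma of_nat_CARD_eq_0: "of_nat CARD('a::{ring_1,finite}) = (0::'a)"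
proof -
  have "(\<Sum>x\<in>(UNIV::'a set). x + 1) = (\<Sum>x\<in>UNIV. x)"
    by (rule sum.reindex_bij_witness[of _ "\<lambda>x. x - 1" "\<lambda>x. x + 1"]) auto
  then show ?thesis by (simp add: sum.distrib)
qed

lemma two_neq_zero_if_odd_card: "odd CARD('a::{ring_1,finite}) \<Longrightarrow> (2::'a) \<noteq> 0"
  using of_nat_CARD_eq_0[where 'a='a] by (auto elim!: oddE)

lemma QA_poly_nonzero:
  assumes "odd CARD('a::{field,finite})" "c m \<noteq> (0::'a)"
  shows "QA_poly m c \<noteq> 0"
proof -
  have "coeff (QA_poly m c) (2 * m) = (\<Sum>j\<le>m. (if j = m then c j else 0) + (if j = 0 \<and> m = 0 then c j else 0))"
    unfolding QA_poly_def coeff_sum coeff_add coeff_monom by (intro sum.cong) auto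
  also have "\<dots> = c m + (if m = 0 then c m else 0)"
    by (simp add: sum.distrib sum.delta)
  also have "\<dots> \<noteq> 0"
    using assms two_neq_zero_if_odd_card[OF assms(1)] by (auto simp: mult_2[symmetric])
  finally show ?thesis by auto
qed

lemma sum_conv_eq_coeff_above:
  fixes u v :: "'a::comm_ring_1 poly"
  assumes "degree u \<le> n" "degree v \<le> n"
  shows "(\<Sum>i=j..n. coeff u i * coeff v (i - j)) = coeff (u * recip (n + m) v) (n + m + j)"
proof -
  have "(\<Sum>i=j..n. coeff u i * coeff v (i - j))
      = (\<Sum>i\<le>n + m + j. if j \<le> i \<and> i \<le> n then coeff u i * coeff v (i - j) else 0)"
    by (subst sum.inter_filter[symmetric]) (auto intro!: sum.cong)
  also have "\<dots> = coeff (u * recip (n + m) v) (n + m + j)"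
    unfolding coeff_mult using assms
    by (intro sum.cong) (auto simp: coeff_recip coeff_eq_0 Suc_diff_le)
  finally show ?thesis .
qed

lemma sum_conv_eq_coeff_below:
  fixes u v :: "'a::comm_ring_1 poly"
  assumes "degree u \<le> n" "degree v \<le> n" "j \<le> m"
  shows "(\<Sum>i=j..n. coeff v i * coeff u (i - j)) = coeff (u * recip (n + m) v) (n + m - j)"
proof -
  let ?g = "\<lambda>l. if l + j \<le> n then coeff u l * coeff v (l + j) else 0"
  have "(\<Sum>i=j..n. coeff v i * coeff u (i - j)) = (\<Sum>l\<le>n + m. ?g l)"
  proof (cases "j \<le> n")
    case True
    have "(\<Sum>i=j..n. coeff v i * coeff u (i - j)) = (\<Sum>l=0..n - j. coeff u l * coeff v (l + j))"
      by (rule sum.reindex_bij_witness[of _ "\<lambda>l. l + j" "\<lambda>i. i - j"]) (use True in auto)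
    also have "\<dots> = (\<Sum>l\<le>n + m. ?g l)"
      using True by (subst sum.inter_filter[symmetric]) (auto intro!: sum.cong)
    finally show ?thesis .
  qed (auto intro!: sum.neutral)
  also have "\<dots> = (\<Sum>l\<le>n + m - j. ?g l)"
    using assms(3) by (intro sum.mono_neutral_right) auto
  also have "\<dots> = coeff (u * recip (n + m) v) (n + m - j)"
    unfolding coeff_mult using assms
    by (intro sum.cong) (auto simp: coeff_recip coeff_eq_0 add.commute)
  finally show ?thesis .
qed

lemma QA_polar_eq_coeff:
  fixes u v :: "'a::comm_ring_1 poly"
  assumes "degree u \<le> n" "degree v \<le> n"
  shows "QA_polar m c n u v = coeff (QA_poly m c * (u * recip (n + m) v)) (n + 2 * m)"
proof -
  let ?P = "u * recip (n + m) v"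
  have "coeff (QA_poly m c * ?P) (n + 2 * m) =
     (\<Sum>j\<le>m. c j * coeff ?P (n + m - j) + c j * coeff ?P (n + m + j))"
    unfolding QA_poly_def sum_distrib_right coeff_sum distrib_right coeff_add coeff_monom_mult
    by (intro sum.cong) (auto simp: algebra_simps)
  also have "\<dots> = QA_bil m c n v u + QA_bil m c n u v"
    unfolding QA_bil_def sum.distrib[symmetric] using assms
    by (intro sum.cong) (auto simp: sum_conv_eq_coeff_above[OF assms, where m=m] sum_conv_eq_coeff_below[OF assms])
  finally show ?thesis by (simp add: QA_polar_def)
qed

section \<open>Weyl differencing\<close>

lemma weyl_differencing:
  fixes \<Phi> :: "'a::{field,finite} poly \<Rightarrow> 'a" and \<Lambda> :: "'a poly \<Rightarrow> 'a poly \<Rightarrow> 'a"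
  assumes psi: "nontrivial_add_char \<psi>"
    and shift: "\<And>x y. \<Phi> (x + y) - \<Phi> x = \<Lambda> y x + \<kappa> y"
    and add: "\<And>y x x'. \<Lambda> y (x + x') = \<Lambda> y x + \<Lambda> y x'"
    and hom: "\<And>y a x. \<Lambda> y (smult a x) = a * \<Lambda> y x"
  shows "(norm (\<Sum>x\<in>polys_below k. \<psi> (\<Phi> x)))\<^sup>2
         \<le> real (CARD('a) ^ k) * real (card {y\<in>polys_below k. \<forall>x\<in>polys_below k. \<Lambda> y x = 0})"
proof -
  have ac: "add_char \<psi>" using psi by (simp add: nontrivial_add_char_def)
  define Ker where "Ker = {y\<in>polys_below k. \<forall>x\<in>polys_below k. \<Lambda> y x = 0}"
  have "complex_of_real ((norm (\<Sum>x\<in>polys_below k. \<psi> (\<Phi> x)))\<^sup>2)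
      = (\<Sum>x'\<in>polys_below k. \<Sum>x\<in>polys_below k. \<psi> (\<Phi> x - \<Phi> x'))"
    unfolding norm_sum_add_char_squared[OF ac] by (rule sum.swap)
  also have "\<dots> = (\<Sum>x'\<in>polys_below k. \<Sum>y\<in>polys_below k. \<psi> (\<Phi> (x' + y) - \<Phi> x'))"
  proof (rule sum.cong[OF refl])
    fix x' :: "'a poly" assume x': "x' \<in> polys_below k"
    show "(\<Sum>x\<in>polys_below k. \<psi> (\<Phi> x - \<Phi> x')) = (\<Sum>y\<in>polys_below k. \<psi> (\<Phi> (x' + y) - \<Phi> x'))"
      by (rule sum.reindex_bij_witness[of _ "\<lambda>y. x' + y" "\<lambda>x. x - x'"])
         (auto simp: x' polys_below_add polys_below_diff)
  qed
  also have "\<dots> = (\<Sum>y\<in>polys_below k. \<psi> (\<kappa> y) * (\<Sum>x\<in>polys_below k. \<psi> (\<Lambda> y x)))"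
    unfolding shift sum_distrib_left
    by (subst sum.swap) (simp add: add_char_add[OF ac] mult.commute)
  also have "\<dots> = (\<Sum>y\<in>polys_below k. \<psi> (\<kappa> y) * (if y \<in> Ker then of_nat (CARD('a) ^ k) else 0))"
  proof (rule sum.cong[OF refl])
    fix y :: "'a poly" assume "y \<in> polys_below k"
    then show "\<psi> (\<kappa> y) * (\<Sum>x\<in>polys_below k. \<psi> (\<Lambda> y x))
        = \<psi> (\<kappa> y) * (if y \<in> Ker then of_nat (CARD('a) ^ k) else 0)"
      by (simp add: sum_add_char_linear[where \<Lambda> = "\<Lambda> y", OF psi add hom] Ker_def)
  qed
  finally have eq: "complex_of_real ((norm (\<Sum>x\<in>polys_below k. \<psi> (\<Phi> x)))\<^sup>2) = \<dots>" .
  have "(norm (\<Sum>x\<in>polys_below k. \<psi> (\<Phi> x)))\<^sup>2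
      = norm (complex_of_real ((norm (\<Sum>x\<in>polys_below k. \<psi> (\<Phi> x)))\<^sup>2))"
    by (simp only: norm_of_real abs_power2 abs_norm_cancel)
  also have "\<dots> \<le> (\<Sum>y\<in>polys_below k. norm (\<psi> (\<kappa> y) * (if y \<in> Ker then of_nat (CARD('a) ^ k) else 0)))"
    unfolding eq by (rule norm_sum)
  also have "\<dots> = (\<Sum>y\<in>polys_below k. if y \<in> Ker then real (CARD('a) ^ k) else 0)"
    by (intro sum.cong refl) (simp add: norm_mult add_char_norm[OF ac] norm_power)
  also have "\<dots> = (\<Sum>y\<in>{y\<in>polys_below k. y \<in> Ker}. real (CARD('a) ^ k))"
    by (rule sum.inter_filter[symmetric, OF finite_polys_below])
  also have "{y\<in>polys_below k. y \<in> Ker} = Ker" by (auto simp: Ker_def)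
  finally show ?thesis by (simp add: Ker_def mult.commute)
qed

lemma QA_diff_sum_squared_le:
  fixes h1 h2 :: "'a::{field,finite} poly"
  assumes psi: "nontrivial_add_char \<psi>"
    and h: "h1 \<in> monics L" "h2 \<in> monics L" and n: "n = k + L"
  shows "(norm (\<Sum>g\<in>monics k. \<psi> (QA m c lf (g * h1) - QA m c lf (g * h2))))\<^sup>2
    \<le> real (CARD('a) ^ k) * real (card {y\<in>polys_below k. \<forall>x\<in>polys_below k.
          QA_polar m c n (x * h1) (y * h1) - QA_polar m c n (x * h2) (y * h2) = 0})"
proof -
  define Q where "Q z = QA_bil m c n z z + QA_lin lf n z" for z
  define \<Phi> where "\<Phi> x = Q ((monom 1 k + x) * h1) - Q ((monom 1 k + x) * h2)" for x
  define \<kappa>h where "\<kappa>h h y = QA_polar m c n (monom 1 k * h) (y * h) + QA_bil m c n (y * h) (y * h)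
    + QA_lin lf n (y * h)" for h y
  have shift_h: "Q ((monom 1 k + (x + y)) * h) - Q ((monom 1 k + x) * h)
      = QA_polar m c n (x * h) (y * h) + \<kappa>h h y" for x y h
    using QA_bil_lin_shift[of m c n "monom 1 k * h" "x * h" "y * h" lf]
    by (simp add: Q_def \<kappa>h_def algebra_simps)
  have "(\<Sum>g\<in>monics k. \<psi> (QA m c lf (g * h1) - QA m c lf (g * h2)))
      = (\<Sum>x\<in>polys_below k. \<psi> (\<Phi> x))"
    unfolding sum_monics
  proof (intro sum.cong refl)
    fix x :: "'a poly" assume "x \<in> polys_below k"
    then have g: "monom 1 k + x \<in> monics k" by (rule monom_add_in_monics)
    show "\<psi> (QA m c lf ((monom 1 k + x) * h1) - QA m c lf ((monom 1 k + x) * h2)) = \<psi> (\<Phi> x)"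
      using degree_mult_monics[OF g h(1)] degree_mult_monics[OF g h(2)] n
      by (simp add: QA_eq_bil_lin \<Phi>_def Q_def)
  qed
  also have "(norm \<dots>)\<^sup>2 \<le> real (CARD('a) ^ k) * real (card {y\<in>polys_below k. \<forall>x\<in>polys_below k.
          QA_polar m c n (x * h1) (y * h1) - QA_polar m c n (x * h2) (y * h2) = 0})"
  proof (rule weyl_differencing[OF psi, where \<kappa> = "\<lambda>y. \<kappa>h h1 y - \<kappa>h h2 y"])
    show "\<Phi> (x + y) - \<Phi> x = QA_polar m c n (x * h1) (y * h1) - QA_polar m c n (x * h2) (y * h2)
        + (\<kappa>h h1 y - \<kappa>h h2 y)" for x y
      using shift_h[of x y h1] shift_h[of x y h2] by (simp add: \<Phi>_def algebra_simps)
  qed (simp_all add: QA_polar_def distrib_right QA_bil_add_left QA_bil_add_right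
         QA_bil_smult_left QA_bil_smult_right algebra_simps)
  finally show ?thesis .
qed

section \<open>The kernel of the polar form\<close>

lemma QA_polar_mult_eq_coeff:
  fixes h x y :: "'a::idom poly"
  assumes "degree h \<le> L" "x \<in> polys_below k" "y \<in> polys_below k"
  shows "QA_polar m c (k + L) (x * h) (y * h)
    = coeff (QA_poly m c * (x * recip (k + m) y * mult_recip L h)) (k + L + 2 * m)"
proof -
  have dx: "degree x \<le> k" and dy: "degree y \<le> k"
    using assms(2,3) by (simp_all add: degree_le_if_polys_below)
  have "degree (x * h) \<le> k + L" "degree (y * h) \<le> k + L"
    using degree_mult_le[of x h] degree_mult_le[of y h] dx dy assms(1) by linarith+
  moreover have "recip (k + L + m) (y * h) = recip (k + m) y * recip L h"
    using recip_mult[of y "k + m" h L] dy assms(1) by (simp add: ac_simps)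
  ultimately show ?thesis by (simp add: QA_polar_eq_coeff mult_recip_def ac_simps)
qed

text \<open>Tested on the monomials \<open>t\<^sup>a\<close>, \<open>a < k\<close>, the polar form of the difference becomes a
  coefficient of \<open>recip (k + m) y * V\<close> (\<open>QA_polar_mult_eq_coeff\<close>), whence this shape.\<close>

definition recip_kernel :: "nat \<Rightarrow> nat \<Rightarrow> nat \<Rightarrow> 'a::comm_ring_1 poly \<Rightarrow> 'a poly set" where
  "recip_kernel k m n V = {y\<in>polys_below k. \<forall>a<k. coeff (recip (k + m) y * V) (n + 2 * m - a) = 0}"

lemma QA_polar_kernel_subset:
  fixes h1 h2 :: "'a::idom poly"
  assumes h: "degree h1 \<le> L" "degree h2 \<le> L" and n: "n = k + L"
  shows "{y\<in>polys_below k. \<forall>x\<in>polys_below k.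
            QA_polar m c n (x * h1) (y * h1) - QA_polar m c n (x * h2) (y * h2) = 0}
    \<subseteq> recip_kernel k m n ((mult_recip L h1 - mult_recip L h2) * QA_poly m c)"
proof safe
  fix y assume y: "y \<in> polys_below k"
    and ker: "\<forall>x\<in>polys_below k. QA_polar m c n (x * h1) (y * h1) - QA_polar m c n (x * h2) (y * h2) = 0"
  have "coeff (recip (k + m) y * ((mult_recip L h1 - mult_recip L h2) * QA_poly m c)) (n + 2 * m - a) = 0"
    if a: "a < k" for a
  proof -
    have x: "monom 1 a \<in> polys_below k" using a by (rule monom_in_polys_below)
    have "0 = coeff (QA_poly m c * (monom 1 a * recip (k + m) y * (mult_recip L h1 - mult_recip L h2)))
        (n + 2 * m)"
      using ker[rule_format, OF x] n
      by (simp add: QA_polar_mult_eq_coeff[OF h(1) x y] QA_polar_mult_eq_coeff[OF h(2) x y]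
          right_diff_distrib)
    also have "\<dots> = coeff (monom 1 a * (recip (k + m) y * ((mult_recip L h1 - mult_recip L h2)
        * QA_poly m c))) (n + 2 * m)"
      by (simp only: ac_simps)
    finally show ?thesis using a n by (simp add: coeff_monom_mult)
  qed
  with y show "y \<in> recip_kernel k m n ((mult_recip L h1 - mult_recip L h2) * QA_poly m c)"
    by (simp add: recip_kernel_def)
qed

lemma coeff_mult_lowest:
  fixes p q :: "'a::comm_semiring_1 poly"
  assumes "\<forall>i<a. coeff p i = 0" "\<forall>i<b. coeff q i = 0"
  shows "coeff (p * q) (a + b) = coeff p a * coeff q b"
proof -
  have "coeff (p * q) (a + b) = (\<Sum>i\<le>a + b. if i = a then coeff p a * coeff q b else 0)"
    unfolding coeff_mult
  proof (intro sum.cong refl)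
    fix i assume "i \<in> {..a + b}"
    then show "coeff p i * coeff q (a + b - i) = (if i = a then coeff p a * coeff q b else 0)"
      using assms by (cases "i < a"; cases "i = a") auto
  qed
  then show ?thesis by simp
qed

text \<open>Elements of the kernel are determined by their top \<open>L + m\<close> coefficients: if these
  vanish, the lowest coefficient of \<open>V\<close> and the highest of \<open>y\<close> produce a non-zero
  coefficient of \<open>recip (k + m) y * V\<close> in the forbidden range.\<close>

lemma recip_kernel_eq_0:
  fixes V :: "'a::field poly"
  assumes V: "V \<noteq> 0" "recip (2 * (L + m)) V = V" and n: "n = k + L"
    and z: "z \<in> recip_kernel k m n V" and top: "\<forall>b\<ge>k - (L + m). coeff z b = 0"
  shows "z = 0"
proof (rule ccontr)
  assume "z \<noteq> 0"
  obtain v where v: "v \<le> L + m" "coeff V v \<noteq> 0" "\<forall>i<v. coeff V i = 0"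
    using self_recip_lowest_coeff[OF V] .
  define b where "b = degree z"
  have zb: "coeff z b \<noteq> 0" using \<open>z \<noteq> 0\<close> by (simp add: b_def)
  then have b: "b < k - (L + m)" using top not_le by blast
  have low: "\<forall>i<k + m - b. coeff (recip (k + m) z) i = 0"
    by (auto simp: coeff_recip b_def coeff_eq_0)
  have "coeff (recip (k + m) z * V) (k + m - b + v) = coeff z b * coeff V v"
    using coeff_mult_lowest[OF low v(3)] b by (simp add: coeff_recip)
  also have "\<dots> \<noteq> 0" using zb v(2) by simp
  finally have "coeff (recip (k + m) z * V) (n + 2 * m - (L + m - v + b)) \<noteq> 0"
    using b v(1) n by (simp add: algebra_simps)
  moreover have "L + m - v + b < k" using b v(1) by linarith
  ultimately show False using z by (simp add: recip_kernel_def)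
qed

lemma card_recip_kernel_le:
  fixes V :: "'a::{field,finite} poly"
  assumes V: "V \<noteq> 0" "recip (2 * (L + m)) V = V" and n: "n = k + L"
  shows "card (recip_kernel k m n V) \<le> CARD('a) ^ (L + m)"
proof -
  define I where "I = {k - (L + m)..<k}"
  let ?f = "\<lambda>y::'a poly. restrict (coeff y) I"
  have "inj_on ?f (recip_kernel k m n V)"
  proof (rule inj_onI)
    fix y1 y2 assume y: "y1 \<in> recip_kernel k m n V" "y2 \<in> recip_kernel k m n V"
      and eq: "?f y1 = ?f y2"
    have "y1 - y2 \<in> recip_kernel k m n V"
      using y by (auto simp: recip_kernel_def polys_below_diff recip_diff left_diff_distrib)
    moreover have "\<forall>b\<ge>k - (L + m). coeff (y1 - y2) b = 0"
    proof safe
      fix b assume "b \<ge> k - (L + m)"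
      then show "coeff (y1 - y2) b = 0"
        using fun_cong[OF eq, of b] y by (cases "b < k") (auto simp: I_def recip_kernel_def polys_below_def)
    qed
    ultimately show "y1 = y2" using recip_kernel_eq_0[OF V n] by fastforce
  qed
  then have "card (recip_kernel k m n V) \<le> card (PiE I (\<lambda>_. (UNIV :: 'a set)))"
    by (rule card_inj_on_le) (auto simp: I_def finite_PiE)
  also have "\<dots> \<le> CARD('a) ^ (L + m)"
    by (simp add: card_PiE I_def power_increasing)
  finally show ?thesis .
qed

lemma recip_mult_recip_diff_QA_poly:
  fixes h1 h2 :: "'a::idom poly"
  assumes "degree h1 \<le> L" "degree h2 \<le> L"
  shows "recip (2 * (L + m)) ((mult_recip L h1 - mult_recip L h2) * QA_poly m c)
       = (mult_recip L h1 - mult_recip L h2) * QA_poly m c"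
proof -
  have "degree (mult_recip L h1 - mult_recip L h2) \<le> 2 * L"
    using degree_mult_recip[OF assms(1)] degree_mult_recip[OF assms(2)] degree_diff_le by blast
  then have "recip (2 * L + 2 * m) ((mult_recip L h1 - mult_recip L h2) * QA_poly m c)
      = recip (2 * L) (mult_recip L h1 - mult_recip L h2) * recip (2 * m) (QA_poly m c)"
    by (rule recip_mult[OF _ degree_QA_poly])
  then show ?thesis by (simp add: recip_diff recip_mult_recip assms recip_QA_poly distrib_left)
qed

lemma QA_diff_sum_offdiag_le:
  fixes h1 h2 :: "'a::{field,finite} poly"
  assumes psi: "nontrivial_add_char \<psi>" and odd: "odd CARD('a)" and cm: "c m \<noteq> 0"
    and h: "h1 \<in> monics L" "h2 \<in> monics L" and n: "n = k + L"
    and ne: "mult_recip L h1 \<noteq> mult_recip L h2"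
  shows "norm (\<Sum>g\<in>monics k. \<psi> (QA m c lf (g * h1) - QA m c lf (g * h2)))
    \<le> sqrt (real (CARD('a) ^ k) * real (CARD('a) ^ (L + m)))"
proof -
  define V where "V = (mult_recip L h1 - mult_recip L h2) * QA_poly m c"
  have d: "degree h1 \<le> L" "degree h2 \<le> L" using h by (auto simp: monics_def)
  have V: "V \<noteq> 0" "recip (2 * (L + m)) V = V"
    using ne QA_poly_nonzero[where c=c and m=m, OF odd cm] recip_mult_recip_diff_QA_poly[OF d]
    by (simp_all add: V_def)
  have "card {y\<in>polys_below k. \<forall>x\<in>polys_below k.
          QA_polar m c n (x * h1) (y * h1) - QA_polar m c n (x * h2) (y * h2) = 0}
      \<le> card (recip_kernel k m n V)" (is "card ?Ker \<le> _")
    unfolding V_def using QA_polar_kernel_subset[OF d n]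
    by (rule card_mono[OF finite_subset[OF _ finite_polys_below], rotated]) (auto simp: recip_kernel_def)
  also have "\<dots> \<le> CARD('a) ^ (L + m)" by (rule card_recip_kernel_le[OF V n])
  finally have card_Ker: "card ?Ker \<le> CARD('a) ^ (L + m)" .
  have "(norm (\<Sum>g\<in>monics k. \<psi> (QA m c lf (g * h1) - QA m c lf (g * h2))))\<^sup>2
      \<le> real (CARD('a) ^ k) * real (card ?Ker)"
    by (rule QA_diff_sum_squared_le[OF psi h n])
  also have "\<dots> \<le> real (CARD('a) ^ k) * real (CARD('a) ^ (L + m))"
    using card_Ker by (intro mult_left_mono) auto
  finally show ?thesis by (rule real_le_rsqrt)
qed

section \<open>Counting monic divisors\<close>

lemma monic_prime_factorization_exists:
  fixes F :: "'a::field poly"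
  assumes "F \<noteq> 0"
  shows "\<exists>M. (\<forall>p\<in>#M. prime_elem p \<and> lead_coeff p = 1)
    \<and> prod_mset M = smult (inverse (lead_coeff F)) F"
  using assms
proof (induction "degree F" arbitrary: F rule: less_induct)
  case less
  show ?case
  proof (cases "irreducible F")
    case True
    let ?p = "smult (inverse (lead_coeff F)) F"
    have "is_unit [:inverse (lead_coeff F):]" using less.prems by (simp add: is_unit_const_poly_iff dvd_field_iff)
    then have "prime_elem ([:inverse (lead_coeff F):] * F)"
      using prime_elem_mult_unit_left field_poly_irreducible_imp_prime[OF True] by blast
    then have "prime_elem ?p" by simp
    then show ?thesis using less.prems by (intro exI[of _ "{#?p#}"]) simp
  next
    case False
    then consider "is_unit F" | a b where "F = a * b" "\<not> is_unit a" "\<not> is_unit b"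
      using less.prems by (auto simp: irreducible_def)
    then show ?thesis
    proof cases
      case 1
      then have "degree F = 0" using less.prems is_unit_iff_degree by blast
      then obtain c where "F = [:c:]" "c \<noteq> 0" using less.prems by (metis degree_0_id pCons_0_0)
      then show ?thesis by (intro exI[of _ "{#}"]) (simp add: one_pCons)
    next
      case 2
      then have nz: "a \<noteq> 0" "b \<noteq> 0" using less.prems by auto
      then have "degree a > 0" "degree b > 0" using 2 is_unit_iff_degree by auto
      then have "degree a < degree F" "degree b < degree F" using 2 nz by (auto simp: degree_mult_eq)
      then obtain Ma Mb where
        "\<forall>p\<in>#Ma. prime_elem p \<and> lead_coeff p = 1" "prod_mset Ma = smult (inverse (lead_coeff a)) a"
        "\<forall>p\<in>#Mb. prime_elem p \<and> lead_coeff p = 1" "prod_mset Mb = smult (inverse (lead_coeff b)) b"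
        using less.hyps nz by meson
      then show ?thesis
        by (intro exI[of _ "Ma + Mb"]) (auto simp: 2 lead_coeff_mult mult_ac)
    qed
  qed
qed

lemma monic_dvd_antisym:
  fixes p q :: "'a::field poly"
  assumes "lead_coeff p = 1" "lead_coeff q = 1" "p dvd q" "q dvd p"
  shows "p = q"
proof -
  obtain r where r: "q = p * r" using assms(3) by (rule dvdE)
  have "q \<noteq> 0" "p \<noteq> 0" using assms(1,2) by auto
  then have "r \<noteq> 0" "degree q \<le> degree p" using r assms(4) by (auto simp: dvd_imp_degree_le)
  then have "degree r = 0" using r \<open>p \<noteq> 0\<close> by (simp add: degree_mult_eq)
  moreover have "lead_coeff r = 1" using r assms(1,2) by (simp add: lead_coeff_mult)
  ultimately have "r = 1" by (metis degree_0_id one_pCons)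
  with r show ?thesis by simp
qed

lemma monic_primes_prod_mset_dvd_imp_subset:
  fixes A B :: "'a::field poly multiset"
  assumes "prod_mset A dvd prod_mset B"
    and "\<forall>p\<in>#A. prime_elem p \<and> lead_coeff p = 1" "\<forall>p\<in>#B. prime_elem p \<and> lead_coeff p = 1"
  shows "A \<subseteq># B"
  using assms
proof (induction A arbitrary: B)
  case empty
  then show ?case by simp
next
  case (add p A B)
  then have p: "prime_elem p" "lead_coeff p = 1" by simp_all
  from add.prems(1) have "p dvd prod_mset B" by (simp add: dvd_mult_left)
  then obtain q where q: "q \<in># B" "p dvd q" by (rule prime_elem_dvd_prod_msetE[OF p(1)])
  then have "q dvd p"
    using irreducibleD'[OF prime_elem_imp_irreducible] add.prems(3) p(1) by (metis prime_elem_not_unit)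
  then have "q = p" using monic_dvd_antisym q(2) p(2) add.prems(3) q(1) by metis
  with q(1) have B: "B = add_mset p (B - {#p#})" by simp
  have "p \<noteq> 0" using p(1) by auto
  then have "prod_mset A dvd prod_mset (B - {#p#})"
    using add.prems(1) by (subst (asm) B) simp
  then have "A \<subseteq># B - {#p#}" using add.IH add.prems(2,3) by (simp add: in_diffD)
  then show ?case by (subst B) simp
qed

definition monic_divisors :: "'a::field poly \<Rightarrow> 'a poly set" where
  "monic_divisors F = {d. d dvd F \<and> lead_coeff d = 1}"

lemma monic_divisors_subset_submultisets:
  fixes F :: "'a::field poly"
  assumes "F \<noteq> 0" and M: "\<forall>p\<in>#M. prime_elem p \<and> lead_coeff p = 1"
    "prod_mset M = smult (inverse (lead_coeff F)) F"
  shows "monic_divisors F \<subseteq> prod_mset ` {N. N \<subseteq># M}"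
proof
  fix d assume "d \<in> monic_divisors F"
  then have d: "d dvd F" "lead_coeff d = 1" by (auto simp: monic_divisors_def)
  moreover have "d \<noteq> 0" using d(2) by auto
  ultimately obtain A where A: "\<forall>p\<in>#A. prime_elem p \<and> lead_coeff p = 1" "prod_mset A = d"
    using monic_prime_factorization_exists[of d] by auto
  have "F dvd prod_mset M" using assms(1) M(2) by (simp add: dvd_smult)
  then have "prod_mset A dvd prod_mset M" using A(2) d(1) by (blast intro: dvd_trans)
  then have "A \<subseteq># M" using A(1) M(1) by (rule monic_primes_prod_mset_dvd_imp_subset)
  with A(2) show "d \<in> prod_mset ` {N. N \<subseteq># M}" by blast
qed

lemma card_submultisets_le: "card {N. N \<subseteq># M} \<le> (\<Prod>x\<in>set_mset M. count M x + 1)"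
  and finite_submultisets: "finite {N. N \<subseteq># M}"
proof -
  let ?f = "\<lambda>N. restrict (count N) (set_mset M)"
  have inj: "inj_on ?f {N. N \<subseteq># M}"
  proof (rule inj_onI, rule multiset_eqI)
    fix N1 N2 x assume N: "N1 \<in> {N. N \<subseteq># M}" "N2 \<in> {N. N \<subseteq># M}" and eq: "?f N1 = ?f N2"
    show "count N1 x = count N2 x"
    proof (cases "x \<in># M")
      case True
      then show ?thesis using fun_cong[OF eq, of x] by simp
    next
      case False
      then show ?thesis using N mset_subset_eq_count[of _ M x] by (auto simp: not_in_iff)
    qed
  qed
  have sub: "?f ` {N. N \<subseteq># M} \<subseteq> PiE (set_mset M) (\<lambda>x. {0..count M x})"
    by (auto simp: mset_subset_eq_count)
  then show "card {N. N \<subseteq># M} \<le> (\<Prod>x\<in>set_mset M. count M x + 1)"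
    using card_inj_on_le[OF inj sub] by (simp add: finite_PiE card_PiE)
  show "finite {N. N \<subseteq># M}"
    using finite_imageD[OF finite_subset[OF sub finite_PiE] inj] by simp
qed

lemma prod_Suc_le_weighted:
  fixes e w :: "'b \<Rightarrow> nat"
  assumes A: "finite A" and w: "\<forall>p\<in>A. w p \<ge> 1" and N: "(\<Sum>p\<in>A. e p * w p) \<le> N"
    and S: "card {p\<in>A. w p \<le> D} \<le> S"
  shows "(\<Prod>p\<in>A. e p + 1) \<le> 2 ^ (N div (D + 1)) * (N + 1) ^ S"
proof -
  define Big where "Big = {p\<in>A. \<not> w p \<le> D}"
  define Small where "Small = {p\<in>A. w p \<le> D}"
  have "(\<Prod>p\<in>Big. e p + 1) \<le> 2 ^ (N div (D + 1))"
  proof -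
    have "(\<Sum>p\<in>Big. e p) * (D + 1) = (\<Sum>p\<in>Big. e p * (D + 1))" by (rule sum_distrib_right)
    also have "\<dots> \<le> (\<Sum>p\<in>Big. e p * w p)"
      by (intro sum_mono mult_le_mono2) (auto simp: Big_def)
    also have "\<dots> \<le> (\<Sum>p\<in>A. e p * w p)"
      using A by (intro sum_mono2) (auto simp: Big_def)
    finally have "(\<Sum>p\<in>Big. e p) \<le> N div (D + 1)"
      using N by (simp add: less_eq_div_iff_mult_less_eq)
    have "(\<Prod>p\<in>Big. e p + 1) \<le> (\<Prod>p\<in>Big. 2 ^ e p)"
      by (intro prod_mono) (auto simp: Suc_leI less_exp)
    also have "\<dots> = 2 ^ (\<Sum>p\<in>Big. e p)" by (simp add: power_sum)
    also have "\<dots> \<le> 2 ^ (N div (D + 1))" by (rule power_increasing) (fact, simp)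
    finally show ?thesis .
  qed
  moreover have "(\<Prod>p\<in>Small. e p + 1) \<le> (N + 1) ^ S"
  proof -
    have "e p \<le> N" if "p \<in> A" for p
    proof -
      have "e p \<le> e p * w p" using w that by simp
      also have "\<dots> \<le> (\<Sum>p\<in>A. e p * w p)" by (rule member_le_sum) (use A that in auto)
      finally show ?thesis using N by simp
    qed
    then have "(\<Prod>p\<in>Small. e p + 1) \<le> (\<Prod>p\<in>Small. N + 1)"
      by (intro prod_mono) (auto simp: Small_def)
    also have "\<dots> \<le> (N + 1) ^ S" using S by (simp add: Small_def power_increasing)
    finally show ?thesis .
  qed
  moreover have "(\<Prod>p\<in>A. e p + 1) = (\<Prod>p\<in>Big. e p + 1) * (\<Prod>p\<in>Small. e p + 1)"
    using A by (subst prod.union_disjoint[symmetric]) (auto simp: Big_def Small_def intro: prod.cong)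
  ultimately show ?thesis by (simp add: mult_le_mono)
qed

lemma degree_prod_mset_eq:
  fixes M :: "'a::idom poly multiset"
  assumes "0 \<notin># M"
  shows "degree (prod_mset M) = (\<Sum>p\<in>set_mset M. count M p * degree p)"
proof -
  have "degree (prod_mset M) = degree (\<Prod>p\<in>set_mset M. p ^ count M p)"
    by (simp add: prod_mset_multiplicity)
  also have "\<dots> = (\<Sum>p\<in>set_mset M. degree (p ^ count M p))"
    using assms by (intro degree_prod_sum_eq) auto
  also have "\<dots> = (\<Sum>p\<in>set_mset M. count M p * degree p)"
  proof (rule sum.cong[OF refl])
    fix p assume "p \<in> set_mset M"
    then have "p \<noteq> 0" using assms by auto
    then show "degree (p ^ count M p) = count M p * degree p" by (rule degree_power_eq)
  qed
  finally show ?thesis .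
qed

lemma card_monic_divisors_le:
  fixes F :: "'a::{field,finite} poly"
  assumes F: "F \<noteq> 0" "degree F \<le> N"
  shows "card (monic_divisors F) \<le> 2 ^ (N div (D + 1)) * (N + 1) ^ (CARD('a) ^ (D + 1))"
proof -
  obtain M where M: "\<forall>p\<in>#M. prime_elem p \<and> lead_coeff p = 1"
    "prod_mset M = smult (inverse (lead_coeff F)) F"
    using monic_prime_factorization_exists[OF F(1)] by blast
  have deg: "degree p \<ge> 1" if "p \<in># M" for p
    using M(1) that is_unit_iff_degree[of p] by (auto simp: prime_elem_def)
  have "0 \<notin># M" using deg by fastforce
  then have "(\<Sum>p\<in>set_mset M. count M p * degree p) = degree (prod_mset M)"
    by (rule degree_prod_mset_eq[symmetric])
  also have "\<dots> = degree F" using M(2) F(1) by simp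
  finally have sum_eq: "(\<Sum>p\<in>set_mset M. count M p * degree p) = degree F" .
  have "{p\<in>set_mset M. degree p \<le> D} \<subseteq> polys_below (Suc D)"
    by (auto intro: polys_below_SucI)
  then have "card {p\<in>set_mset M. degree p \<le> D} \<le> card (polys_below (Suc D) :: 'a poly set)"
    by (rule card_mono[OF finite_polys_below])
  then have small: "card {p\<in>set_mset M. degree p \<le> D} \<le> CARD('a) ^ (D + 1)"
    by (simp add: card_polys_below)
  have "(\<Prod>p\<in>set_mset M. count M p + 1) \<le> 2 ^ (N div (D + 1)) * (N + 1) ^ (CARD('a) ^ (D + 1))"
    by (rule prod_Suc_le_weighted[OF finite_set_mset _ _ small]) (use deg sum_eq F(2) in auto)
  moreover have "card (monic_divisors F) \<le> card (prod_mset ` {N. N \<subseteq># M})"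
    by (intro card_mono finite_imageI finite_submultisets monic_divisors_subset_submultisets F(1) M)
  moreover have "card (prod_mset ` {N. N \<subseteq># M}) \<le> card {N. N \<subseteq># M}"
    by (rule card_image_le[OF finite_submultisets])
  ultimately show ?thesis using card_submultisets_le[of M] by linarith
qed

lemma finite_monic_divisors: "F \<noteq> 0 \<Longrightarrow> finite (monic_divisors (F::'a::{field,finite} poly))"
  by (rule finite_subset[OF _ finite_polys_below[of "Suc (degree F)"]])
     (auto simp: monic_divisors_def dvd_imp_degree_le polys_below_SucI)

definition max_monic_divisors :: "'a::{field,finite} itself \<Rightarrow> nat \<Rightarrow> nat" where
  "max_monic_divisors _ N = Max ((\<lambda>F::'a poly. card (monic_divisors F)) ` {F. F \<noteq> 0 \<and> degree F \<le> N})"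

lemma finite_nonzero_degree_le: "finite {F::'a::{field,finite} poly. F \<noteq> 0 \<and> degree F \<le> N}"
  by (rule finite_subset[OF _ finite_polys_below[of "Suc N"]]) (auto intro: polys_below_SucI)

lemma card_monic_divisors_le_max:
  fixes F :: "'a::{field,finite} poly"
  assumes "F \<noteq> 0" "degree F \<le> N"
  shows "card (monic_divisors F) \<le> max_monic_divisors TYPE('a) N"
  unfolding max_monic_divisors_def using assms by (intro Max_ge finite_imageI finite_nonzero_degree_le) auto

lemma max_monic_divisors_ge_1: "max_monic_divisors TYPE('a::{field,finite}) N \<ge> 1"
proof -
  have "{1} \<subseteq> monic_divisors (1::'a poly)" by (simp add: monic_divisors_def)
  then have "card {1::'a poly} \<le> card (monic_divisors (1::'a poly))"
    by (rule card_mono[OF finite_monic_divisors, rotated]) simp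
  then have "card (monic_divisors (1::'a poly)) \<ge> 1" by simp
  then show ?thesis using card_monic_divisors_le_max[of "1::'a poly" N] by simp
qed

lemma max_monic_divisors_le:
  "max_monic_divisors TYPE('a::{field,finite}) N \<le> 2 ^ (N div (D + 1)) * (N + 1) ^ (CARD('a) ^ (D + 1))"
proof -
  let ?S = "(\<lambda>F. card (monic_divisors F)) ` {F::'a poly. F \<noteq> 0 \<and> degree F \<le> N}"
  have "finite ?S" by (intro finite_imageI finite_nonzero_degree_le)
  moreover have "?S \<noteq> {}" by (auto intro!: exI[of _ "1::'a poly"])
  moreover have "\<forall>x\<in>?S. x \<le> 2 ^ (N div (D + 1)) * (N + 1) ^ (CARD('a) ^ (D + 1))"
    using card_monic_divisors_le by blast
  ultimately show ?thesis unfolding max_monic_divisors_def using Max_le_iff by blast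
qed

lemma CARD_ge_2: "CARD('a::{field,finite}) \<ge> 2"
proof -
  have "card {0::'a, 1} \<le> CARD('a)" by (rule card_mono) auto
  then show ?thesis by simp
qed

definition divisor_exponent :: "'a::{field,finite} itself \<Rightarrow> nat \<Rightarrow> real" where
  "divisor_exponent t n = log (real CARD('a)) (real (max_monic_divisors t (2 * n))) / (2 * real n)"

lemma sqrt_powr: "Q > 0 \<Longrightarrow> sqrt (Q powr x) = Q powr (x / 2)"
  by (simp add: powr_half_sqrt[symmetric] powr_powr)

lemma max_monic_divisors_0: "max_monic_divisors TYPE('a::{field,finite}) 0 = 1"
  using max_monic_divisors_le[where 'a='a, of 0 0] max_monic_divisors_ge_1[where 'a='a, of 0] by simp

lemma powr_divisor_exponent:
  "real CARD('a::{field,finite}) powr (divisor_exponent TYPE('a) n * real n)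
    = sqrt (real (max_monic_divisors TYPE('a) (2 * n)))"
proof (cases "n = 0")
  case True
  then show ?thesis by (simp add: divisor_exponent_def max_monic_divisors_0)
next
  case False
  define q where "q = real CARD('a)"
  define d where "d = real (max_monic_divisors TYPE('a) (2 * n))"
  have q: "q > 1" and d: "d \<ge> 1"
    using CARD_ge_2[where 'a='a] max_monic_divisors_ge_1[where 'a='a, of "2 * n"]
    by (simp_all add: q_def d_def)
  have "q powr (divisor_exponent TYPE('a) n * real n) = q powr (log q d / 2)"
    using False by (simp add: divisor_exponent_def q_def d_def)
  also have "\<dots> = sqrt (q powr log q d)" using q by (simp add: sqrt_powr)
  also have "\<dots> = sqrt d" using q d by simp
  finally show ?thesis by (simp add: q_def d_def)
qed

lemma divisor_exponent_le:
  assumes "n > 0"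
  shows "divisor_exponent TYPE('a::{field,finite}) n
    \<le> real (CARD('a) ^ (D + 1)) * ln (2 * real n + 1) / (2 * real n * ln (real CARD('a)))
      + ln 2 / (real (D + 1) * ln (real CARD('a)))"
proof -
  define q where "q = real CARD('a)"
  have q: "ln q > 0" using CARD_ge_2[where 'a='a] by (simp add: q_def)
  have "real (max_monic_divisors TYPE('a) (2 * n))
      \<le> real (2 ^ (2 * n div (D + 1)) * (2 * n + 1) ^ (CARD('a) ^ (D + 1)))"
    by (simp only: of_nat_le_iff max_monic_divisors_le)
  then have "ln (real (max_monic_divisors TYPE('a) (2 * n)))
      \<le> ln (real (2 ^ (2 * n div (D + 1)) * (2 * n + 1) ^ (CARD('a) ^ (D + 1))))"
    using max_monic_divisors_ge_1[where 'a='a, of "2 * n"] by (subst ln_le_cancel_iff) auto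
  also have "\<dots> = real (2 * n div (D + 1)) * ln 2 + real (CARD('a) ^ (D + 1)) * ln (2 * real n + 1)"
    by (simp add: ln_mult ln_realpow add.commute)
  also have "\<dots> \<le> 2 * real n / real (D + 1) * ln 2 + real (CARD('a) ^ (D + 1)) * ln (2 * real n + 1)"
    using of_nat_div_le_of_nat[of "2 * n" "D + 1"] by (intro add_right_mono mult_right_mono) auto
  finally have "ln (real (max_monic_divisors TYPE('a) (2 * n)))
      \<le> 2 * real n / real (D + 1) * ln 2 + real (CARD('a) ^ (D + 1)) * ln (2 * real n + 1)" .
  moreover have "divisor_exponent TYPE('a) n
      = ln (real (max_monic_divisors TYPE('a) (2 * n))) / (2 * real n * ln q)"
    by (simp add: divisor_exponent_def log_def q_def mult_ac)
  ultimately have "divisor_exponent TYPE('a) n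
      \<le> (2 * real n / real (D + 1) * ln 2 + real (CARD('a) ^ (D + 1)) * ln (2 * real n + 1))
        / (2 * real n * ln q)"
    using assms q by (simp add: divide_right_mono)
  also have "\<dots> = real (CARD('a) ^ (D + 1)) * ln (2 * real n + 1) / (2 * real n * ln q)
      + ln 2 / (real (D + 1) * ln q)"
    using assms q by (simp add: add_divide_distrib)
  finally show ?thesis by (simp add: q_def)
qed

lemma divisor_exponent_nonneg: "divisor_exponent TYPE('a::{field,finite}) n \<ge> 0"
  using CARD_ge_2[where 'a='a] max_monic_divisors_ge_1[where 'a='a, of "2 * n"]
  by (simp add: divisor_exponent_def zero_le_log_cancel_iff)

lemma divisor_exponent_tendsto_0: "divisor_exponent TYPE('a::{field,finite}) \<longlonglongrightarrow> 0"
proof (rule order_tendstoI)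
  fix a :: real assume "a < 0"
  then show "eventually (\<lambda>n. a < divisor_exponent TYPE('a) n) sequentially"
    by (intro always_eventually allI) (auto intro: less_le_trans divisor_exponent_nonneg)
next
  fix r :: real assume r: "r > 0"
  define l where "l = ln (real CARD('a))"
  have l: "l > 0" using CARD_ge_2[where 'a='a] by (simp add: l_def)
  obtain D :: nat where "2 * ln 2 / (r * l) < real D" using reals_Archimedean2 by blast
  then have "2 * ln 2 / (r * l) < real (D + 1)" by simp
  then have "2 * ln 2 < real (D + 1) * (r * l)"
    using r l by (simp add: pos_divide_less_eq)
  then have small: "ln 2 / (real (D + 1) * l) < r / 2"
    using l by (simp add: pos_divide_less_eq mult_ac)
  have "(\<lambda>n::nat. ln (2 * real n + 1) / real n) \<longlonglongrightarrow> 0" by real_asymp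
  then have "(\<lambda>n::nat. real (CARD('a) ^ (D + 1)) / (2 * l) * (ln (2 * real n + 1) / real n))
      \<longlonglongrightarrow> 0"
    by (rule tendsto_mult_right_zero)
  then have "eventually (\<lambda>n. real (CARD('a) ^ (D + 1)) / (2 * l) * (ln (2 * real n + 1) / real n)
      < r / 2) sequentially"
    by (rule order_tendstoD(2)) (use r in simp)
  moreover have "eventually (\<lambda>n::nat. n > 0) sequentially" by (rule eventually_gt_at_top)
  ultimately show "eventually (\<lambda>n. divisor_exponent TYPE('a) n < r) sequentially"
  proof eventually_elim
    case (elim n)
    have "divisor_exponent TYPE('a) n
        \<le> real (CARD('a) ^ (D + 1)) * ln (2 * real n + 1) / (2 * real n * l)
          + ln 2 / (real (D + 1) * l)"
      using divisor_exponent_le[where 'a='a, OF elim(2), of D] by (simp add: l_def)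
    moreover have "real (CARD('a) ^ (D + 1)) * ln (2 * real n + 1) / (2 * real n * l)
        = real (CARD('a) ^ (D + 1)) / (2 * l) * (ln (2 * real n + 1) / real n)"
      by simp
    ultimately show ?case using elim(1) small by linarith
  qed
qed

lemma Tsum_squared_le:
  fixes \<psi> :: "'a::{field,finite} \<Rightarrow> complex"
  assumes "add_char \<psi>"
  shows "(Tsum m c lf \<psi> n k)\<^sup>2 \<le> real (CARD('a) ^ k) *
    (\<Sum>h1\<in>monics (n - k). \<Sum>h2\<in>monics (n - k).
       norm (\<Sum>g\<in>monics k. \<psi> (QA m c lf (g * h1) - QA m c lf (g * h2))))"
proof -
  define S where "S g = (\<Sum>h\<in>monics (n - k). \<psi> (QA m c lf (g * h)))" for g
  have "(Tsum m c lf \<psi> n k)\<^sup>2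
      \<le> (\<Sum>g\<in>monics k. (norm (S g))\<^sup>2) * real (card (monics k :: 'a poly set))"
    unfolding Tsum_def S_def by (rule sum_squared_le_sum_of_squares)
  also have "(\<Sum>g\<in>monics k. (norm (S g))\<^sup>2)
      = norm (\<Sum>g\<in>monics k. complex_of_real ((norm (S g))\<^sup>2))"
    by (simp only: of_real_sum[symmetric] norm_of_real abs_of_nonneg sum_nonneg zero_le_power2)
  also have "\<dots> = norm (\<Sum>h1\<in>monics (n - k). \<Sum>h2\<in>monics (n - k). \<Sum>g\<in>monics k.
      \<psi> (QA m c lf (g * h1) - QA m c lf (g * h2)))"
    unfolding S_def norm_sum_add_char_squared[OF assms]
    by (subst sum.swap) (simp only: sum.swap[of _ "monics k"])
  also have "\<dots> \<le> (\<Sum>h1\<in>monics (n - k). \<Sum>h2\<in>monics (n - k).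
      norm (\<Sum>g\<in>monics k. \<psi> (QA m c lf (g * h1) - QA m c lf (g * h2))))"
    by (intro order.trans[OF norm_sum] sum_mono norm_sum)
  finally show ?thesis by (simp add: card_monics mult_right_mono mult.commute)
qed

lemma card_mult_recip_eq_le:
  fixes h1 :: "'a::{field,finite} poly"
  assumes h1: "h1 \<in> monics L" and "L \<le> n"
  shows "card {h2\<in>monics L. mult_recip L h2 = mult_recip L h1} \<le> max_monic_divisors TYPE('a) (2 * n)"
proof -
  have nz: "mult_recip L h1 \<noteq> 0" by (rule mult_recip_nonzero[OF h1])
  have "{h2\<in>monics L. mult_recip L h2 = mult_recip L h1} \<subseteq> monic_divisors (mult_recip L h1)"
    by (auto simp: monic_divisors_def monics_def mult_recip_def dest: sym)
  then have "card {h2\<in>monics L. mult_recip L h2 = mult_recip L h1} \<le> card (monic_divisors (mult_recip L h1))"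
    by (rule card_mono[OF finite_monic_divisors[OF nz]])
  also have "\<dots> \<le> max_monic_divisors TYPE('a) (2 * n)"
    using degree_mult_recip[of h1 L] h1 assms(2) by (intro card_monic_divisors_le_max nz) (auto simp: monics_def)
  finally show ?thesis .
qed

lemma QA_diff_sum_le:
  fixes h1 h2 :: "'a::{field,finite} poly"
  assumes psi: "nontrivial_add_char \<psi>" and odd: "odd CARD('a)" and cm: "c m \<noteq> 0"
    and h: "h1 \<in> monics L" "h2 \<in> monics L" and n: "n = k + L"
  shows "norm (\<Sum>g\<in>monics k. \<psi> (QA m c lf (g * h1) - QA m c lf (g * h2)))
    \<le> (if mult_recip L h2 = mult_recip L h1 then real (CARD('a) ^ k) else 0)
      + sqrt (real (CARD('a) ^ k) * real (CARD('a) ^ (L + m)))"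
proof (cases "mult_recip L h2 = mult_recip L h1")
  case True
  have "add_char \<psi>" using psi by (simp add: nontrivial_add_char_def)
  then have "norm (\<Sum>g\<in>monics k. \<psi> (QA m c lf (g * h1) - QA m c lf (g * h2)))
      \<le> real (card (monics k :: 'a poly set))"
    by (rule norm_sum_add_char_le)
  with True show ?thesis by (simp add: card_monics add_increasing2)
next
  case False
  then show ?thesis using QA_diff_sum_offdiag_le[where c=c and m=m, OF psi odd cm h n] by simp
qed

lemma sum_pairs_QA_diff_le:
  fixes \<psi> :: "'a::{field,finite} \<Rightarrow> complex"
  assumes psi: "nontrivial_add_char \<psi>" and odd: "odd CARD('a)" and cm: "c m \<noteq> 0"
    and n: "n = k + L"
  shows "(\<Sum>h1\<in>monics L. \<Sum>h2\<in>monics L.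
      norm (\<Sum>g\<in>monics k. \<psi> (QA m c lf (g * h1) - QA m c lf (g * h2))))
    \<le> real (CARD('a) ^ L) * (real (CARD('a) ^ k) * real (max_monic_divisors TYPE('a) (2 * n))
      + real (CARD('a) ^ L) * sqrt (real (CARD('a) ^ k) * real (CARD('a) ^ (L + m))))"
proof -
  define B where "B = sqrt (real (CARD('a) ^ k) * real (CARD('a) ^ (L + m)))"
  have "(\<Sum>h2\<in>monics L. norm (\<Sum>g\<in>monics k. \<psi> (QA m c lf (g * h1) - QA m c lf (g * h2))))
      \<le> real (CARD('a) ^ k) * real (max_monic_divisors TYPE('a) (2 * n)) + real (CARD('a) ^ L) * B"
    if h1: "h1 \<in> monics L" for h1
  proof -
    have "(\<Sum>h2\<in>monics L. norm (\<Sum>g\<in>monics k. \<psi> (QA m c lf (g * h1) - QA m c lf (g * h2))))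
        \<le> (\<Sum>h2\<in>monics L. (if mult_recip L h2 = mult_recip L h1 then real (CARD('a) ^ k) else 0) + B)"
      unfolding B_def by (rule sum_mono) (rule QA_diff_sum_le[where c=c and m=m, OF psi odd cm h1 _ n])
    also have "\<dots> = real (CARD('a) ^ k) * real (card {h2\<in>monics L. mult_recip L h2 = mult_recip L h1})
        + real (CARD('a) ^ L) * B"
      by (simp add: sum.distrib sum.If_cases finite_monics card_monics Int_def conj_commute)
    also have "\<dots> \<le> real (CARD('a) ^ k) * real (max_monic_divisors TYPE('a) (2 * n))
        + real (CARD('a) ^ L) * B"
      using card_mult_recip_eq_le[OF h1, of n] n by (intro add_right_mono mult_left_mono) auto
    finally show ?thesis .
  qed
  then have "(\<Sum>h1\<in>monics L. \<Sum>h2\<in>monics L.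
      norm (\<Sum>g\<in>monics k. \<psi> (QA m c lf (g * h1) - QA m c lf (g * h2))))
    \<le> (\<Sum>h1\<in>(monics L :: 'a poly set).
      real (CARD('a) ^ k) * real (max_monic_divisors TYPE('a) (2 * n)) + real (CARD('a) ^ L) * B)"
    by (rule sum_mono)
  then show ?thesis by (simp add: B_def card_monics)
qed

lemma le_powr_19_20_if_square_le:
  fixes Q d T C :: real and n k L m :: nat
  assumes Q: "Q > 1" and d: "d \<ge> 1" and T: "T \<ge> 0" and n: "n = k + L"
    and k: "3 * real n / 5 - C \<le> real k" "real k \<le> 9 * real n / 10 + C"
    and T2: "T\<^sup>2 \<le> Q ^ k * (Q ^ L * (Q ^ k * d + Q ^ L * sqrt (Q ^ k * Q ^ (L + m))))"
  shows "T \<le> sqrt (2 * Q powr (C + real m / 2)) * Q powr (19 * real n / 20) * sqrt d"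
proof -
  define E where "E = 19 * real n / 10 + C + real m / 2"
  have E: "real n + real k \<le> E" "real (k + 2 * L) + real (n + m) / 2 \<le> E"
    using k n of_nat_0_le_iff[of m] unfolding E_def by (simp_all add: field_simps)
  have "Q ^ k * (Q ^ L * (Q ^ k * d)) = Q ^ (n + k) * d"
    by (simp add: n power_add mult_ac)
  also have "\<dots> = Q powr real (n + k) * d"
    using Q by (subst powr_realpow) auto
  also have "\<dots> \<le> Q powr E * d"
    using Q d E(1) by (intro mult_right_mono powr_mono) auto
  finally have diag: "Q ^ k * (Q ^ L * (Q ^ k * d)) \<le> Q powr E * d" .
  have "Q ^ k * (Q ^ L * (Q ^ L * sqrt (Q ^ k * Q ^ (L + m))))
      = Q ^ (k + 2 * L) * sqrt (Q ^ (n + m))"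
    by (simp add: n power_add power_mult mult_ac power2_eq_square)
  also have "\<dots> = Q powr real (k + 2 * L) * sqrt (Q powr real (n + m))"
    using Q by (subst (1 2) powr_realpow) auto
  also have "\<dots> = Q powr (real (k + 2 * L) + real (n + m) / 2)"
    using Q by (simp only: sqrt_powr powr_add)
  also have "\<dots> \<le> Q powr E"
    using Q E(2) by (intro powr_mono) auto
  also have "\<dots> \<le> Q powr E * d" using d mult_left_mono[OF d, of "Q powr E"] by simp
  finally have off: "Q ^ k * (Q ^ L * (Q ^ L * sqrt (Q ^ k * Q ^ (L + m)))) \<le> Q powr E * d" .
  have "T\<^sup>2 \<le> 2 * Q powr E * d"
    using T2 diag off unfolding distrib_left by linarith
  also have "2 * Q powr E * d = 2 * Q powr (C + real m / 2) * (Q powr (19 * real n / 20))\<^sup>2 * d"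
    by (simp add: E_def powr_add[symmetric] power2_eq_square add_divide_distrib add_ac)
  also have "\<dots> = (sqrt (2 * Q powr (C + real m / 2)) * Q powr (19 * real n / 20) * sqrt d)\<^sup>2"
    using d by (simp add: power_mult_distrib)
  finally show ?thesis
    by (rule power2_le_imp_le) (use Q d in simp)
qed

lemma Tsum_le:
  fixes lf :: "nat \<Rightarrow> nat \<Rightarrow> 'a::{field,finite}" and \<psi> :: "'a \<Rightarrow> complex"
  assumes psi: "nontrivial_add_char \<psi>" and odd: "odd CARD('a)" and cm: "c m \<noteq> 0"
    and kn: "k \<le> n" and k: "3 * real n / 5 - C \<le> real k" "real k \<le> 9 * real n / 10 + C"
  shows "Tsum m c lf \<psi> n k \<le> sqrt (2 * real CARD('a) powr (C + real m / 2))
    * real CARD('a) powr (19 * real n / 20) * sqrt (real (max_monic_divisors TYPE('a) (2 * n)))"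
proof -
  define L where "L = n - k"
  have n: "n = k + L" using kn by (simp add: L_def)
  have "(Tsum m c lf \<psi> n k)\<^sup>2 \<le> real (CARD('a) ^ k) *
    (\<Sum>h1\<in>monics L. \<Sum>h2\<in>monics L.
       norm (\<Sum>g\<in>monics k. \<psi> (QA m c lf (g * h1) - QA m c lf (g * h2))))"
    unfolding L_def by (rule Tsum_squared_le) (use psi in \<open>simp add: nontrivial_add_char_def\<close>)
  also have "\<dots> \<le> real (CARD('a) ^ k) * (real (CARD('a) ^ L) * (real (CARD('a) ^ k)
      * real (max_monic_divisors TYPE('a) (2 * n))
      + real (CARD('a) ^ L) * sqrt (real (CARD('a) ^ k) * real (CARD('a) ^ (L + m)))))"
    by (intro mult_left_mono sum_pairs_QA_diff_le psi odd cm n) simp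
  finally show ?thesis
    using CARD_ge_2[where 'a='a] max_monic_divisors_ge_1[where 'a='a, of "2 * n"]
    by (intro le_powr_19_20_if_square_le[OF _ _ _ n k]) (auto simp: Tsum_def sum_nonneg)
qed

theorem proposition7p3:
  fixes m :: nat and c :: "nat \<Rightarrow> 'a::{field,finite}" and C :: real
  assumes "odd CARD('a)" and "c m \<noteq> 0" and "C \<ge> 0"
  shows "\<exists>K::real. \<exists>\<epsilon>::nat \<Rightarrow> real. \<epsilon> \<longlonglongrightarrow> 0 \<and>
    (\<forall>n k (lf :: nat \<Rightarrow> nat \<Rightarrow> 'a) (\<psi> :: 'a \<Rightarrow> complex).
       nontrivial_add_char \<psi> \<and> real k \<ge> 3 * real n / 5 - C \<and> real k \<le> 9 * real n / 10 + C
       \<and> k \<le> n \<longrightarrow>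
       Tsum m c lf \<psi> n k \<le> K * real CARD('a) powr (19 * real n / 20 + \<epsilon> n * real n))"
proof (intro exI conjI allI impI)
  show "divisor_exponent TYPE('a) \<longlonglongrightarrow> 0" by (rule divisor_exponent_tendsto_0)
next
  fix n k :: nat and lf :: "nat \<Rightarrow> nat \<Rightarrow> 'a" and \<psi> :: "'a \<Rightarrow> complex"
  assume "nontrivial_add_char \<psi> \<and> real k \<ge> 3 * real n / 5 - C \<and> real k \<le> 9 * real n / 10 + C
    \<and> k \<le> n"
  then have "Tsum m c lf \<psi> n k \<le> sqrt (2 * real CARD('a) powr (C + real m / 2))
    * real CARD('a) powr (19 * real n / 20) * sqrt (real (max_monic_divisors TYPE('a) (2 * n)))"
    using assms by (intro Tsum_le) auto
  also have "\<dots> = sqrt (2 * real CARD('a) powr (C + real m / 2))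
    * real CARD('a) powr (19 * real n / 20 + divisor_exponent TYPE('a) n * real n)"
    by (simp add: powr_add powr_divisor_exponent)
  finally show "Tsum m c lf \<psi> n k \<le> sqrt (2 * real CARD('a) powr (C + real m / 2))
    * real CARD('a) powr (19 * real n / 20 + divisor_exponent TYPE('a) n * real n)" .
qed

end
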